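(* Let $p\ge1$, $l\in\mathbb{Z}_{\ge0}$, and $s_1,\dots,s_p\in\mathbb{C}$ with $|s_i|<1$ or $s_i=1$ for every $1\le i\le p$. Then for every $\varepsilon>0$, $(\Delta^l\mathtt{c}_{s_1,\dots,s_p,0})(m)=O\bigl(m^{-(l+1-\varepsilon)}\bigr)$ as $m\to\infty$.
   Context: Convention $0^0=1$. For $u_1,\dots,u_q\in\mathbb{C}$, $\mathtt{c}_{u_1,\dots,u_q}(m)=\sum_{m=m_1\ge\cdots\ge m_q\ge0}\frac{u_1^{m_1-m_2}\cdots u_{q-1}^{m_{q-1}-m_q}}{(m_1+1)\cdots(m_{q-1}+1)}u_q^{m_q}$; here $q=p+1$ and $u_{p+1}=0$. $(\Delta a)(m)=a(m)-a(m+1)$. *)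

theory Defs
  imports "HOL-Analysis.Analysis" "HOL-Library.Landau_Symbols"
begin

text \<open>Index tuples (m_1,...,m_q) with m = m_1 \<ge> ... \<ge> m_q \<ge> 0, as lists of length q
  (list position i corresponds to m_(i+1)).\<close>
definition chains :: "nat \<Rightarrow> nat \<Rightarrow> nat list set" where
  "chains q m = {ms. length ms = q \<and> ms ! 0 = m \<and> sorted_wrt (\<ge>) ms \<and> set ms \<subseteq> {..m}}"

text \<open>c_{u_1,...,u_q}(m); u is the list [u_1,...,u_q] (q \<ge> 1). Note 0^0 = 1 for ^.\<close>
definition ccoef :: "complex list \<Rightarrow> nat \<Rightarrow> complex" where
  "ccoef u m = (\<Sum>ms\<in>chains (length u) m.
      (\<Prod>i<length u - 1. u ! i ^ (ms ! i - ms ! (i+1)) / of_nat (ms ! i + 1))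
      * u ! (length u - 1) ^ (ms ! (length u - 1)))"

definition fdiff :: "(nat \<Rightarrow> complex) \<Rightarrow> nat \<Rightarrow> complex" where
  "fdiff a = (\<lambda>m. a m - a (Suc m))"

end

theory Submission
  imports Defs "HOL-Real_Asymp.Real_Asymp"
begin

text \<open>
  Call a sequence f a symbol of order \<beta> if for every l and every \<epsilon> > 0 its l-th difference
  is O((m+1)^-(l+\<beta>-\<epsilon>)) uniformly in m. Symbols are stable under shifts, and a
  discrete Leibniz rule shows that orders add under products. The coefficients satisfy
  c_{x,u}(m) = (\<Sum>j\<le>m. x^(m-j) c_u(j)) / (m+1), and c_{0} is the unit impulse, a symbol of
  every order. Hence it suffices that a \<mapsto> (\<Sum>j\<le>m. x^(m-j) a(j)) / (m+1) preserves
  order 1: the geometric convolution preserves order 1 when |x| < 1 (its differences are again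
  geometric convolutions of the differences of a, up to the term at 0), while for x = 1 the partial
  sums of a symbol of order 1 have order 0, losing only the \<epsilon>; multiplying by 1/(m+1),
  a symbol of order 1, restores order 1.
\<close>

definition decays :: "real \<Rightarrow> (nat \<Rightarrow> complex) \<Rightarrow> bool" where
  "decays \<alpha> f \<longleftrightarrow> (\<exists>K. \<forall>m. norm (f m) \<le> K * (real m + 1) powr (-\<alpha>))"

definition symbol :: "real \<Rightarrow> (nat \<Rightarrow> complex) \<Rightarrow> bool" where
  "symbol \<beta> f \<longleftrightarrow> (\<forall>l \<epsilon>. \<epsilon> > 0 \<longrightarrow> decays (real l + \<beta> - \<epsilon>) ((fdiff ^^ l) f))"

definition geom_conv :: "complex \<Rightarrow> (nat \<Rightarrow> complex) \<Rightarrow> nat \<Rightarrow> complex" where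
  "geom_conv u g m = (\<Sum>j\<le>m. u ^ (m - j) * g j)"

subsection \<open>Differences\<close>

lemma fdiff_funpow_add: "(fdiff ^^ l) (\<lambda>m. f m + g m) = (\<lambda>m. (fdiff ^^ l) f m + (fdiff ^^ l) g m)"
  by (induction l) (auto simp: fdiff_def fun_eq_iff)

lemma fdiff_funpow_uminus: "(fdiff ^^ l) (\<lambda>m. - f m) = (\<lambda>m. - (fdiff ^^ l) f m)"
  by (induction l) (auto simp: fdiff_def fun_eq_iff)

lemma fdiff_funpow_shift: "(fdiff ^^ l) (\<lambda>m. f (Suc m)) = (\<lambda>m. (fdiff ^^ l) f (Suc m))"
  by (induction l) (auto simp: fdiff_def fun_eq_iff)

lemma fdiff_mult: "fdiff (\<lambda>m. f m * g m) = (\<lambda>m. fdiff f m * g m + f (Suc m) * fdiff g m)"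
  by (simp add: fdiff_def algebra_simps fun_eq_iff)

lemma fdiff_partial_sum: "fdiff (\<lambda>m. \<Sum>j\<le>m. a j) = (\<lambda>m. - a (Suc m))"
  by (simp add: fdiff_def fun_eq_iff)

lemma fdiff_funpow_inverse_Suc:
  "(fdiff ^^ l) (\<lambda>m. 1 / of_nat (Suc m)) m = fact l / pochhammer (of_nat (Suc m)) (Suc l)"
proof (induction l arbitrary: m)
  case (Suc l)
  have "(fdiff ^^ Suc l) (\<lambda>m. 1 / of_nat (Suc m)) m
      = (fdiff ^^ l) (\<lambda>m. 1 / of_nat (Suc m)) m - (fdiff ^^ l) (\<lambda>m. 1 / of_nat (Suc m)) (Suc m)"
    by (simp only: funpow.simps comp_def fdiff_def)
  also have "\<dots> = fact l / pochhammer (of_nat (Suc m)) (Suc l) - fact l / pochhammer (of_nat (Suc (Suc m))) (Suc l)"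
    by (simp only: Suc.IH)
  also have "\<dots> = fact (Suc l) / pochhammer (of_nat (Suc m)) (Suc (Suc l))"
  proof -
    define A B P where "A = pochhammer (of_nat (Suc m) :: complex) (Suc l)"
      and "B = pochhammer (of_nat (Suc (Suc m)) :: complex) (Suc l)"
      and "P = pochhammer (of_nat (Suc m) :: complex) (Suc (Suc l))"
    have PA: "P = of_nat (m + l + 2) * A"
      unfolding P_def A_def by (subst pochhammer_Suc) (simp add: algebra_simps)
    have PB: "P = of_nat (Suc m) * B"
      unfolding P_def B_def by (subst pochhammer_rec) (simp add: algebra_simps)
    have "P \<noteq> 0"
      unfolding P_def by (metis pochhammer_of_nat of_nat_eq_0_iff pochhammer_pos zero_less_Suc less_irrefl)
    have "fact l / A = fact l * of_nat (m + l + 2) / P"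
      using \<open>P \<noteq> 0\<close> unfolding PA by simp
    moreover have "fact l / B = fact l * of_nat (Suc m) / P"
      using \<open>P \<noteq> 0\<close> unfolding PB by (simp del: of_nat_Suc)
    ultimately have "fact l / A - fact l / B = fact l * (of_nat (m + l + 2) - of_nat (Suc m)) / P"
      by (simp add: diff_divide_distrib[symmetric] algebra_simps)
    also have "\<dots> = fact (Suc l) / P"
      by (simp add: algebra_simps)
    finally show ?thesis
      by (simp add: A_def B_def P_def)
  qed
  finally show ?case .
qed simp

subsection \<open>Polynomial decay\<close>

lemma powr_bound_nonneg:
  assumes "\<forall>m. norm (f m) \<le> K * (real m + 1) powr x"
  shows "K \<ge> 0"
  using assms[rule_format, of 0] by (simp add: order_trans[OF norm_ge_zero])

lemma decays_mono:
  assumes "decays \<alpha> f" "\<alpha>' \<le> \<alpha>"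
  shows "decays \<alpha>' f"
proof -
  obtain K where K: "\<forall>m. norm (f m) \<le> K * (real m + 1) powr (-\<alpha>)"
    using assms(1) unfolding decays_def by blast
  have "K * (real m + 1) powr (-\<alpha>) \<le> K * (real m + 1) powr (-\<alpha>')" for m
    using powr_bound_nonneg[OF K] assms(2) by (intro mult_left_mono powr_mono) auto
  then show ?thesis
    unfolding decays_def using K order_trans by blast
qed

lemma decays_add:
  assumes "decays \<alpha> f" "decays \<alpha> g"
  shows "decays \<alpha> (\<lambda>m. f m + g m)"
proof -
  obtain K1 K2 where K1: "\<forall>m. norm (f m) \<le> K1 * (real m + 1) powr (-\<alpha>)"
    and K2: "\<forall>m. norm (g m) \<le> K2 * (real m + 1) powr (-\<alpha>)"
    using assms unfolding decays_def by blast
  have "norm (f m + g m) \<le> (K1 + K2) * (real m + 1) powr (-\<alpha>)" for m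
    using norm_triangle_ineq[of "f m" "g m"] K1[rule_format, of m] K2[rule_format, of m]
    by (simp add: distrib_right)
  then show ?thesis
    unfolding decays_def by blast
qed

lemma decays_mult:
  assumes "decays \<alpha> f" "decays \<beta> g"
  shows "decays (\<alpha> + \<beta>) (\<lambda>m. f m * g m)"
proof -
  obtain K1 K2 where K1: "\<forall>m. norm (f m) \<le> K1 * (real m + 1) powr (-\<alpha>)"
    and K2: "\<forall>m. norm (g m) \<le> K2 * (real m + 1) powr (-\<beta>)"
    using assms unfolding decays_def by blast
  have "norm (f m * g m) \<le> (K1 * K2) * (real m + 1) powr (-(\<alpha> + \<beta>))" for m
  proof -
    have "norm (f m * g m) \<le> (K1 * (real m + 1) powr (-\<alpha>)) * (K2 * (real m + 1) powr (-\<beta>))"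
      unfolding norm_mult using K1 K2 powr_bound_nonneg[OF K1] by (intro mult_mono) auto
    then show ?thesis
      by (simp add: powr_add[symmetric] algebra_simps)
  qed
  then show ?thesis
    unfolding decays_def by blast
qed

lemma Suc_powr_le: "(real m + 2) powr x \<le> max 1 (2 powr x) * (real m + 1) powr x"
proof (cases "x \<ge> 0")
  case True
  have "(real m + 2) powr x \<le> (2 * (real m + 1)) powr x"
    using True by (intro powr_mono2) auto
  also have "\<dots> = 2 powr x * (real m + 1) powr x"
    by (rule powr_mult)
  also have "\<dots> \<le> max 1 (2 powr x) * (real m + 1) powr x"
    by (intro mult_right_mono) auto
  finally show ?thesis .
next
  case False
  then have "(real m + 2) powr x \<le> (real m + 1) powr x"
    by (intro powr_mono2') auto
  also have "\<dots> \<le> max 1 (2 powr x) * (real m + 1) powr x"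
    using mult_right_mono[of 1 "max 1 (2 powr x)" "(real m + 1) powr x"] by simp
  finally show ?thesis .
qed

lemma decays_shift:
  assumes "decays \<alpha> f"
  shows "decays \<alpha> (\<lambda>m. f (Suc m))"
proof -
  obtain K where K: "\<forall>m. norm (f m) \<le> K * (real m + 1) powr (-\<alpha>)"
    using assms unfolding decays_def by blast
  have "norm (f (Suc m)) \<le> (K * max 1 (2 powr (-\<alpha>))) * (real m + 1) powr (-\<alpha>)" for m
  proof -
    have "norm (f (Suc m)) \<le> K * (real m + 2) powr (-\<alpha>)"
      using K[rule_format, of "Suc m"] by (simp add: add.commute add.left_commute)
    also have "\<dots> \<le> K * (max 1 (2 powr (-\<alpha>)) * (real m + 1) powr (-\<alpha>))"
      using powr_bound_nonneg[OF K] by (intro mult_left_mono Suc_powr_le)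
    finally show ?thesis
      by (simp add: mult.assoc)
  qed
  then show ?thesis
    unfolding decays_def by blast
qed

lemma decays_eq_from_1:
  assumes "decays \<alpha> f" "\<And>m. m \<ge> 1 \<Longrightarrow> g m = f m"
  shows "decays \<alpha> g"
proof -
  obtain K where K: "\<forall>m. norm (f m) \<le> K * (real m + 1) powr (-\<alpha>)"
    using assms unfolding decays_def by blast
  have "norm (g m) \<le> max K (norm (g 0)) * (real m + 1) powr (-\<alpha>)" for m
  proof (cases "m = 0")
    case False
    then have "norm (g m) \<le> K * (real m + 1) powr (-\<alpha>)"
      using assms(2) K by simp
    also have "\<dots> \<le> max K (norm (g 0)) * (real m + 1) powr (-\<alpha>)"
      by (intro mult_right_mono) auto
    finally show ?thesis .
  qed simp
  then show ?thesis
    unfolding decays_def by blast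
qed

lemma decays_bigo:
  assumes "decays \<alpha> f"
  shows "(\<lambda>m. norm (f m)) \<in> O(\<lambda>m. real m powr (-\<alpha>))"
proof -
  obtain K where K: "\<forall>m. norm (f m) \<le> K * (real m + 1) powr (-\<alpha>)"
    using assms unfolding decays_def by blast
  have "(\<lambda>m. norm (f m)) \<in> O(\<lambda>m. (real m + 1) powr (-\<alpha>))"
    using K by (intro bigoI[where c = K]) auto
  also have "(\<lambda>m. (real m + 1) powr (-\<alpha>)) \<in> O(\<lambda>m. real m powr (-\<alpha>))"
    by real_asymp
  finally show ?thesis .
qed

lemma powr_increment_ge:
  assumes "0 < \<epsilon>" "\<epsilon> \<le> 1" "x \<ge> (1::real)"
  shows "\<epsilon> * x powr (\<epsilon> - 1) \<le> x powr \<epsilon> - (x - 1) powr \<epsilon>"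
proof (cases "x = 1")
  case False
  then have x: "x > 1"
    using assms(3) by simp
  have "((x - 1) / x) powr \<epsilon> * 1 powr (1 - \<epsilon>) \<le> \<epsilon> * ((x - 1) / x) + (1 - \<epsilon>) * 1"
    using x assms by (intro Youngs_inequality_0) auto
  then have Y: "((x - 1) / x) powr \<epsilon> \<le> 1 - \<epsilon> / x"
    using x by (simp add: field_simps)
  have "(x - 1) powr \<epsilon> = x powr \<epsilon> * ((x - 1) / x) powr \<epsilon>"
    using x by (simp add: powr_divide)
  also have "\<dots> \<le> x powr \<epsilon> * (1 - \<epsilon> / x)"
    using Y by (intro mult_left_mono) auto
  also have "\<dots> = x powr \<epsilon> - \<epsilon> * (x powr \<epsilon> / x powr 1)"
    using x by (simp add: algebra_simps)
  also have "x powr \<epsilon> / x powr 1 = x powr (\<epsilon> - 1)"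
    by (simp add: powr_diff)
  finally show ?thesis
    by simp
qed (use assms in simp)

lemma sum_powr_le:
  assumes "0 < \<epsilon>" "\<epsilon> \<le> 1"
  shows "(\<Sum>j\<le>m. (real j + 1) powr (\<epsilon> - 1)) \<le> (real m + 1) powr \<epsilon> / \<epsilon>"
proof (induction m)
  case (Suc m)
  have "\<epsilon> * (real m + 2) powr (\<epsilon> - 1) \<le> (real m + 2) powr \<epsilon> - (real m + 1) powr \<epsilon>"
    using powr_increment_ge[OF assms, of "real m + 2"] by (simp add: add.commute)
  with Suc.IH assms show ?case
    by (simp add: field_simps add.commute add.left_commute)
qed (use assms in simp)

lemma decays_partial_sum:
  assumes "0 < \<epsilon>" "\<epsilon> \<le> 1" "decays (1 - \<epsilon>) a"
  shows "decays (-\<epsilon>) (\<lambda>m. \<Sum>j\<le>m. a j)"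
proof -
  obtain K where K: "\<forall>m. norm (a m) \<le> K * (real m + 1) powr (-(1 - \<epsilon>))"
    using assms(3) unfolding decays_def by blast
  have "norm (\<Sum>j\<le>m. a j) \<le> (K / \<epsilon>) * (real m + 1) powr (-(-\<epsilon>))" for m
  proof -
    have "norm (\<Sum>j\<le>m. a j) \<le> (\<Sum>j\<le>m. K * (real j + 1) powr (\<epsilon> - 1))"
      using K by (intro order_trans[OF norm_sum] sum_mono) simp
    also have "\<dots> \<le> K * ((real m + 1) powr \<epsilon> / \<epsilon>)"
      unfolding sum_distrib_left[symmetric]
      using powr_bound_nonneg[OF K] sum_powr_le[OF assms(1,2)] by (rule mult_left_mono[rotated])
    finally show ?thesis
      by simp
  qed
  then show ?thesis
    unfolding decays_def by blast
qed

lemma geom_conv_0 [simp]: "geom_conv u g 0 = g 0"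
  by (simp add: geom_conv_def)

lemma geom_conv_Suc: "geom_conv u g (Suc m) = u * geom_conv u g m + g (Suc m)"
proof -
  have "(\<Sum>j\<le>m. u ^ (Suc m - j) * g j) = u * geom_conv u g m"
    unfolding geom_conv_def sum_distrib_left by (intro sum.cong) (simp_all add: Suc_diff_le)
  then show ?thesis
    by (simp add: geom_conv_def)
qed

lemma fdiff_geom_conv:
  "fdiff (geom_conv u g) = geom_conv u (\<lambda>n. if n = 0 then (1 - u) * g 0 - g 1 else fdiff g n)"
proof
  fix m
  show "fdiff (geom_conv u g) m = geom_conv u (\<lambda>n. if n = 0 then (1 - u) * g 0 - g 1 else fdiff g n) m"
  proof (induction m)
    case (Suc m)
    have "fdiff (geom_conv u g) (Suc m) = u * fdiff (geom_conv u g) m + fdiff g (Suc m)"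
      by (simp add: fdiff_def geom_conv_Suc algebra_simps)
    then show ?case
      by (simp add: Suc.IH geom_conv_Suc)
  qed (simp add: fdiff_def geom_conv_Suc algebra_simps)
qed

lemma fdiff_funpow_geom_conv:
  "\<exists>h. (\<forall>n\<ge>1. h n = (fdiff ^^ l) g n) \<and> (fdiff ^^ l) (geom_conv u g) = geom_conv u h"
proof (induction l)
  case (Suc l)
  then obtain h where h: "\<forall>n\<ge>1. h n = (fdiff ^^ l) g n" "(fdiff ^^ l) (geom_conv u g) = geom_conv u h"
    by blast
  show ?case
  proof (intro exI conjI allI impI)
    show "(fdiff ^^ Suc l) (geom_conv u g) = geom_conv u (\<lambda>n. if n = 0 then (1 - u) * h 0 - h 1 else fdiff h n)"
      using h(2) fdiff_geom_conv by simp
    fix n :: nat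
    assume "n \<ge> 1"
    then show "(if n = 0 then (1 - u) * h 0 - h 1 else fdiff h n) = (fdiff ^^ Suc l) g n"
      using h(1) by (simp add: fdiff_def)
  qed
qed auto

lemma summable_geometric_powr:
  assumes "0 \<le> r" "r < 1"
  shows "summable (\<lambda>i. r ^ i * (real i + 1) powr \<alpha>)"
proof -
  define c where "c = (1 + r) / 2"
  have c: "0 < c" "c < 1" "r \<le> c"
    using assms by (simp_all add: c_def)
  have "summable (\<lambda>i. c ^ i * (real i + 1) powr \<alpha>)"
  proof (rule summable_comparison_test_bigo)
    show "summable (\<lambda>i. norm (((1 + c) / 2) ^ i))"
      using c by (simp add: summable_geometric)
    show "(\<lambda>i. c ^ i * (real i + 1) powr \<alpha>) \<in> O(\<lambda>i. ((1 + c) / 2) ^ i)"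
      using c by real_asymp
  qed
  then show ?thesis
    by (rule summable_comparison_test'[where N = 0]) (use assms c in \<open>auto intro!: mult_right_mono power_mono\<close>)
qed

lemma decays_geom_conv:
  assumes "norm u < 1" "\<alpha> \<ge> 0" "decays \<alpha> h"
  shows "decays \<alpha> (geom_conv u h)"
proof -
  define r where "r = norm u"
  have r: "0 \<le> r" "r < 1"
    using assms(1) by (simp_all add: r_def)
  obtain K where K: "\<forall>n. norm (h n) \<le> K * (real n + 1) powr (-\<alpha>)"
    using assms(3) unfolding decays_def by blast
  have K0: "K \<ge> 0"
    using powr_bound_nonneg[OF K] .
  define S where "S = (\<Sum>i. r ^ i * (real i + 1) powr \<alpha>)"
  have "norm (geom_conv u h m) \<le> (K * S) * (real m + 1) powr (-\<alpha>)" for m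
  proof -
    have weight_le: "(real j + 1) powr (-\<alpha>) \<le> (real m + 1) powr (-\<alpha>) * (real (m - j) + 1) powr \<alpha>"
      if "j \<le> m" for j
    proof -
      have "real m + 1 \<le> (real j + 1) * (real (m - j) + 1)"
        using that by (simp add: of_nat_diff algebra_simps mult_left_mono)
      then have "(real m + 1) powr \<alpha> \<le> (real j + 1) powr \<alpha> * (real (m - j) + 1) powr \<alpha>"
        using assms(2) by (simp add: powr_mult[symmetric] powr_mono2)
      then show ?thesis
        by (simp add: powr_minus field_simps)
    qed
    have "norm (geom_conv u h m) \<le> (\<Sum>j\<le>m. r ^ (m - j) * norm (h j))"
      unfolding geom_conv_def r_def by (rule order_trans[OF norm_sum]) (simp add: norm_mult norm_power)
    also have "\<dots> \<le> (\<Sum>j\<le>m. r ^ (m - j) * (K * ((real m + 1) powr (-\<alpha>) * (real (m - j) + 1) powr \<alpha>)))"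
    proof (intro sum_mono mult_left_mono)
      fix j
      assume "j \<in> {..m}"
      then show "norm (h j) \<le> K * ((real m + 1) powr (-\<alpha>) * (real (m - j) + 1) powr \<alpha>)"
        using K[rule_format, of j] mult_left_mono[OF weight_le K0] by force
    qed (use r in simp)
    also have "\<dots> = K * (real m + 1) powr (-\<alpha>) * (\<Sum>j\<le>m. r ^ (m - j) * (real (m - j) + 1) powr \<alpha>)"
      by (simp add: sum_distrib_left algebra_simps)
    also have "(\<Sum>j\<le>m. r ^ (m - j) * (real (m - j) + 1) powr \<alpha>) = (\<Sum>i\<le>m. r ^ i * (real i + 1) powr \<alpha>)"
      by (rule sum.reindex_bij_witness[where i = "\<lambda>i. m - i" and j = "\<lambda>i. m - i"]) auto
    also have "K * (real m + 1) powr (-\<alpha>) * (\<Sum>i\<le>m. r ^ i * (real i + 1) powr \<alpha>) \<le> K * (real m + 1) powr (-\<alpha>) * S"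
      unfolding S_def using summable_geometric_powr[OF r] r K0
      by (intro mult_left_mono sum_le_suminf) auto
    finally show ?thesis
      by (simp add: algebra_simps)
  qed
  then show ?thesis
    unfolding decays_def by blast
qed

subsection \<open>Symbols\<close>

lemma symbolI_small:
  assumes "\<And>l \<epsilon>. 0 < \<epsilon> \<Longrightarrow> \<epsilon> \<le> 1 \<Longrightarrow> decays (real l + \<beta> - \<epsilon>) ((fdiff ^^ l) f)"
  shows "symbol \<beta> f"
  unfolding symbol_def
proof (intro allI impI)
  fix l and \<epsilon> :: real
  assume "\<epsilon> > 0"
  then have "decays (real l + \<beta> - min \<epsilon> 1) ((fdiff ^^ l) f)"
    by (intro assms) auto
  then show "decays (real l + \<beta> - \<epsilon>) ((fdiff ^^ l) f)"
    by (rule decays_mono) simp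
qed

lemma symbolD: "symbol \<beta> f \<Longrightarrow> \<epsilon> > 0 \<Longrightarrow> decays (real l + \<beta> - \<epsilon>) ((fdiff ^^ l) f)"
  unfolding symbol_def by blast

lemma symbol_mono: "symbol \<beta> f \<Longrightarrow> \<beta>' \<le> \<beta> \<Longrightarrow> symbol \<beta>' f"
  unfolding symbol_def by (metis add_le_cancel_left diff_right_mono decays_mono)

lemma symbol_shift: "symbol \<beta> f \<Longrightarrow> symbol \<beta> (\<lambda>m. f (Suc m))"
  unfolding symbol_def fdiff_funpow_shift by (auto intro: decays_shift)

lemma symbol_uminus: "symbol \<beta> f \<Longrightarrow> symbol \<beta> (\<lambda>m. - f m)"
  unfolding symbol_def decays_def fdiff_funpow_uminus by simp

lemma symbol_fdiff:
  assumes "symbol \<beta> f"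
  shows "symbol (\<beta> + 1) (fdiff f)"
  unfolding symbol_def
proof (intro allI impI)
  fix l and \<epsilon> :: real
  assume "\<epsilon> > 0"
  then have "decays (real (Suc l) + \<beta> - \<epsilon>) ((fdiff ^^ Suc l) f)"
    by (rule symbolD[OF assms])
  then show "decays (real l + (\<beta> + 1) - \<epsilon>) ((fdiff ^^ l) (fdiff f))"
    unfolding funpow_Suc_right comp_def by (simp add: algebra_simps)
qed

lemma decays_fdiff_funpow_mult:
  assumes "symbol \<beta> f" "symbol \<gamma> g" "\<epsilon> > 0"
  shows "decays (real l + (\<beta> + \<gamma>) - \<epsilon>) ((fdiff ^^ l) (\<lambda>m. f m * g m))"
  using assms
proof (induction l arbitrary: f g \<beta> \<gamma>)
  case 0
  have "decays (\<beta> - \<epsilon> / 2) f" "decays (\<gamma> - \<epsilon> / 2) g"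
    using symbolD[OF 0(1), of "\<epsilon> / 2" 0] symbolD[OF 0(2), of "\<epsilon> / 2" 0] 0(3) by simp_all
  then have "decays ((\<beta> - \<epsilon> / 2) + (\<gamma> - \<epsilon> / 2)) (\<lambda>m. f m * g m)"
    by (rule decays_mult)
  moreover have "(\<beta> - \<epsilon> / 2) + (\<gamma> - \<epsilon> / 2) = real 0 + (\<beta> + \<gamma>) - \<epsilon>"
    by simp
  ultimately show ?case
    by simp
next
  case (Suc l)
  have "decays (real l + ((\<beta> + 1) + \<gamma>) - \<epsilon>) ((fdiff ^^ l) (\<lambda>m. fdiff f m * g m))"
    using Suc.IH symbol_fdiff Suc.prems by blast
  moreover have "decays (real l + (\<beta> + (\<gamma> + 1)) - \<epsilon>) ((fdiff ^^ l) (\<lambda>m. f (Suc m) * fdiff g m))"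
    using Suc.IH symbol_shift symbol_fdiff Suc.prems by blast
  ultimately have "decays (real l + ((\<beta> + \<gamma>) + 1) - \<epsilon>) ((fdiff ^^ l) (fdiff (\<lambda>m. f m * g m)))"
    unfolding fdiff_mult fdiff_funpow_add by (intro decays_add) (simp_all add: add_ac)
  then show ?case
    unfolding funpow_Suc_right comp_def by (simp add: algebra_simps)
qed

lemma symbol_mult: "symbol \<beta> f \<Longrightarrow> symbol \<gamma> g \<Longrightarrow> symbol (\<beta> + \<gamma>) (\<lambda>m. f m * g m)"
  unfolding symbol_def[of "\<beta> + \<gamma>"] using decays_fdiff_funpow_mult by blast

lemma symbol_impulse: "symbol \<beta> (\<lambda>m. if m = 0 then 1 else 0)"
proof -
  have "(fdiff ^^ l) (\<lambda>m. if m = 0 then 1 else 0) m = 0" if "m \<ge> 1" for l m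
    using that by (induction l arbitrary: m) (auto simp: fdiff_def)
  moreover have "decays \<alpha> (\<lambda>_. 0)" for \<alpha>
    unfolding decays_def by (auto intro: exI[of _ 0])
  ultimately show ?thesis
    unfolding symbol_def by (blast intro: decays_eq_from_1)
qed

lemma power_le_pochhammer:
  fixes x :: "'a :: linordered_semidom"
  assumes "x > 0"
  shows "x ^ n \<le> pochhammer x n"
proof (induction n)
  case (Suc n)
  have "x ^ n * x \<le> pochhammer x n * (x + of_nat n)"
    using Suc.IH assms by (intro mult_mono pochhammer_nonneg) auto
  then show ?case
    by (simp add: pochhammer_Suc mult.commute)
qed simp

lemma symbol_inverse_Suc: "symbol 1 (\<lambda>m. 1 / of_nat (Suc m))"
proof (rule symbolI_small)
  fix l and \<epsilon> :: real
  assume "0 < \<epsilon>"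
  have "norm ((fdiff ^^ l) (\<lambda>m. 1 / of_nat (Suc m)) m) \<le> fact l * (real m + 1) powr (-(real l + 1 - \<epsilon>))"
    for m
  proof -
    have "norm ((fdiff ^^ l) (\<lambda>m. 1 / of_nat (Suc m)) m) = fact l / pochhammer (real m + 1) (Suc l)"
    proof -
      have "pochhammer (of_nat (Suc m)) (Suc l) = complex_of_real (pochhammer (real m + 1) (Suc l))"
        by (metis pochhammer_of_nat of_real_of_nat_eq of_nat_Suc add.commute)
      then show ?thesis
        unfolding fdiff_funpow_inverse_Suc norm_divide
        by (simp add: pochhammer_nonneg norm_fact)
    qed
    also have "\<dots> \<le> fact l / (real m + 1) ^ Suc l"
      by (intro divide_left_mono power_le_pochhammer) (auto intro!: mult_pos_pos pochhammer_pos)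
    also have "\<dots> = fact l * (real m + 1) powr (-(real l + 1))"
    proof -
      have "(real m + 1) powr (real l + 1) = (real m + 1) ^ Suc l"
        using powr_realpow[of "real m + 1" "Suc l"] by (simp add: add.commute)
      then show ?thesis
        unfolding powr_minus by (simp add: divide_inverse)
    qed
    also have "\<dots> \<le> fact l * (real m + 1) powr (-(real l + 1 - \<epsilon>))"
      using \<open>0 < \<epsilon>\<close> by (intro mult_left_mono powr_mono) auto
    finally show ?thesis .
  qed
  then show "decays (real l + 1 - \<epsilon>) ((fdiff ^^ l) (\<lambda>m. 1 / of_nat (Suc m)))"
    unfolding decays_def by blast
qed

lemma symbol_partial_sum:
  assumes "symbol 1 a"
  shows "symbol 0 (\<lambda>m. \<Sum>j\<le>m. a j)"
proof (rule symbolI_small)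
  fix l and \<epsilon> :: real
  assume \<epsilon>: "0 < \<epsilon>" "\<epsilon> \<le> 1"
  show "decays (real l + 0 - \<epsilon>) ((fdiff ^^ l) (\<lambda>m. \<Sum>j\<le>m. a j))"
  proof (cases l)
    case 0
    have "decays (1 - \<epsilon>) a"
      using symbolD[OF assms \<epsilon>(1), of 0] by simp
    then show ?thesis
      using decays_partial_sum[OF \<epsilon>] 0 by simp
  next
    case (Suc l')
    have "symbol 1 (\<lambda>m. - a (Suc m))"
      using assms by (intro symbol_uminus symbol_shift)
    then have "decays (real l' + 1 - \<epsilon>) ((fdiff ^^ l') (\<lambda>m. - a (Suc m)))"
      using \<epsilon>(1) by (rule symbolD)
    then show ?thesis
      unfolding Suc funpow_Suc_right comp_def fdiff_partial_sum by (simp add: add.commute)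
  qed
qed

lemma symbol_geom_conv:
  assumes "norm u < 1" "symbol 1 a"
  shows "symbol 1 (geom_conv u a)"
proof (rule symbolI_small)
  fix l and \<epsilon> :: real
  assume \<epsilon>: "0 < \<epsilon>" "\<epsilon> \<le> 1"
  obtain h where h: "\<forall>n\<ge>1. h n = (fdiff ^^ l) a n" "(fdiff ^^ l) (geom_conv u a) = geom_conv u h"
    using fdiff_funpow_geom_conv by blast
  have "decays (real l + 1 - \<epsilon>) h"
    using symbolD[OF assms(2) \<epsilon>(1)] h(1) by (blast intro: decays_eq_from_1)
  then show "decays (real l + 1 - \<epsilon>) ((fdiff ^^ l) (geom_conv u a))"
    unfolding h(2) using assms(1) \<epsilon>(2) by (intro decays_geom_conv) auto
qed

lemma symbol_geom_conv_average:
  assumes "norm x < 1 \<or> x = 1" "symbol 1 a"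
  shows "symbol 1 (\<lambda>m. geom_conv x a m / of_nat (Suc m))"
proof -
  have "symbol 0 (geom_conv x a)"
  proof (cases "x = 1")
    case True
    then have "geom_conv x a = (\<lambda>m. \<Sum>j\<le>m. a j)"
      by (simp add: geom_conv_def fun_eq_iff)
    then show ?thesis
      using symbol_partial_sum[OF assms(2)] by simp
  next
    case False
    then show ?thesis
      using assms by (intro symbol_mono[OF symbol_geom_conv]) auto
  qed
  from symbol_mult[OF this symbol_inverse_Suc] show ?thesis
    by (simp add: divide_inverse)
qed

subsection \<open>The recursion for the coefficients\<close>

lemma finite_chains: "finite (chains q m)"
proof -
  have "chains q m \<subseteq> {ms. set ms \<subseteq> {..m} \<and> length ms = q}"
    unfolding chains_def by blast
  then show ?thesis
    using finite_lists_length_eq[of "{..m}" q] finite_subset by blast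
qed

lemma chains_one: "chains (Suc 0) m = {[m]}"
  unfolding chains_def by (auto simp: length_Suc_conv)

lemma chains_Suc:
  assumes "q \<ge> 1"
  shows "chains (Suc q) m = (\<lambda>(j, ms). m # ms) ` (SIGMA j:{..m}. chains q j)"
proof (intro equalityI subsetI)
  fix ms'
  assume ms': "ms' \<in> chains (Suc q) m"
  then obtain ms where ms'_eq: "ms' = m # ms"
    by (cases ms') (auto simp: chains_def)
  with ms' assms obtain y ys where ms: "ms = y # ys"
    by (cases ms) (auto simp: chains_def)
  have "y \<le> m" "ms \<in> chains q y"
    using ms' assms unfolding ms'_eq ms by (auto simp: chains_def)
  then show "ms' \<in> (\<lambda>(j, ms). m # ms) ` (SIGMA j:{..m}. chains q j)"
    using ms'_eq by force
next
  fix ms'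
  assume "ms' \<in> (\<lambda>(j, ms). m # ms) ` (SIGMA j:{..m}. chains q j)"
  then obtain j ms where "j \<le> m" "ms \<in> chains q j" "ms' = m # ms"
    by auto
  then show "ms' \<in> chains (Suc q) m"
    unfolding chains_def by auto
qed

lemma inj_on_Cons_chains: "inj_on (\<lambda>(j, ms). m # ms) (SIGMA j:{..m}. chains q j)"
  by (rule inj_onI) (auto simp: chains_def)

lemma ccoef_singleton_zero: "ccoef [0] m = (if m = 0 then 1 else 0)"
  by (simp add: ccoef_def chains_one)

lemma ccoef_Cons:
  assumes "xs \<noteq> []"
  shows "ccoef (x # xs) m = geom_conv x (ccoef xs) m / of_nat (Suc m)"
proof -
  define q where "q = length xs"
  obtain q' where q': "q = Suc q'"
    using assms by (cases xs) (simp_all add: q_def)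
  then have "q \<ge> 1"
    by simp
  define T where "T ms = (\<Prod>i<q'. xs ! i ^ (ms ! i - ms ! (i + 1)) / of_nat (ms ! i + 1)) * xs ! q' ^ (ms ! q')"
    for ms
  have ccoef_xs: "ccoef xs j = (\<Sum>ms\<in>chains q j. T ms)" for j
    using q' by (simp add: ccoef_def T_def q_def)
  have summand: "(\<Prod>i<q. (x # xs) ! i ^ ((m # ms) ! i - (m # ms) ! (i + 1)) / of_nat ((m # ms) ! i + 1))
      * (x # xs) ! q ^ ((m # ms) ! q) = x ^ (m - j) / of_nat (Suc m) * T ms"
    if "ms \<in> chains q j" for j ms
  proof -
    have "ms ! 0 = j"
      using that by (simp add: chains_def)
    then show ?thesis
      unfolding q' by (subst prod.lessThan_Suc_shift) (simp add: T_def)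
  qed
  have "ccoef (x # xs) m = (\<Sum>ms'\<in>chains (Suc q) m.
      (\<Prod>i<q. (x # xs) ! i ^ (ms' ! i - ms' ! (i + 1)) / of_nat (ms' ! i + 1)) * (x # xs) ! q ^ (ms' ! q))"
    by (simp add: ccoef_def q_def)
  also have "\<dots> = (\<Sum>(j, ms)\<in>(SIGMA j:{..m}. chains q j). x ^ (m - j) / of_nat (Suc m) * T ms)"
    unfolding chains_Suc[OF \<open>q \<ge> 1\<close>] sum.reindex[OF inj_on_Cons_chains]
    using summand by (intro sum.cong) auto
  also have "\<dots> = (\<Sum>j\<le>m. \<Sum>ms\<in>chains q j. x ^ (m - j) / of_nat (Suc m) * T ms)"
    by (subst sum.Sigma[symmetric]) (auto simp: finite_chains)
  also have "\<dots> = geom_conv x (ccoef xs) m / of_nat (Suc m)"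
    by (simp add: geom_conv_def ccoef_xs sum_distrib_left sum_divide_distrib)
  finally show ?thesis .
qed

lemma symbol_ccoef:
  assumes "\<forall>i<length s. norm (s ! i) < 1 \<or> s ! i = 1"
  shows "symbol 1 (ccoef (s @ [0]))"
  using assms
proof (induction s)
  case Nil
  show ?case
    using symbol_impulse by (simp add: ccoef_singleton_zero)
next
  case (Cons x s)
  have "symbol 1 (\<lambda>m. geom_conv x (ccoef (s @ [0])) m / of_nat (Suc m))"
    using Cons by (intro symbol_geom_conv_average Cons.IH) force+
  then show ?case
    by (simp add: ccoef_Cons)
qed

theorem proposition3p3:
  fixes s :: "complex list" and p l :: nat
  assumes "p \<ge> 1" and "length s = p"
    and "\<forall>i<p. norm (s ! i) < 1 \<or> s ! i = 1"
  shows "\<forall>\<epsilon>>0. (\<lambda>m. norm ((fdiff ^^ l) (ccoef (s @ [0])) m))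
           \<in> O(\<lambda>m. real m powr (- (real l + 1 - \<epsilon>)))"
proof (intro allI impI)
  fix \<epsilon> :: real
  assume "\<epsilon> > 0"
  have "symbol 1 (ccoef (s @ [0]))"
    using assms(2,3) by (intro symbol_ccoef) simp
  with \<open>\<epsilon> > 0\<close> show "(\<lambda>m. norm ((fdiff ^^ l) (ccoef (s @ [0])) m)) \<in> O(\<lambda>m. real m powr (- (real l + 1 - \<epsilon>)))"
    by (intro decays_bigo symbolD)
qed

end
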